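(* Let $C>0$ and let $w\in C^\infty(\mathbf{R}^n\setminus\{0\})$ be homogeneous of order $\alpha$, $1<\alpha\le2$. Assume that for any two points $x,y\in\mathbf{R}^n$ with $0<|x|,|y|\le1$ there exists a matrix $A\in K_C$ with $\mathrm{Tr}(A\,D^2w(x))=\mathrm{Tr}(A\,D^2w(y))=0$. Then $w$ is a viscosity solution (in the unit ball of $\mathbf{R}^n$) of an Isaacs equation $\sup_b\inf_a L_{ab}u=0$, where $\{L_{ab}\}$ is a two-parameter family of linear operators $L_{ab}=\sum_{i,j}a_{ij}\partial^2/\partial x_i\partial x_j$ whose coefficient matrices $(a_{ij})$ all lie in $K_C$.
   Context: For $C>0$, $K_C\subset S^2(\mathbf{R}^n)$ denotes the set of real symmetric $n\times n$ matrices $A=(a_{ij})$ with $C^{-1}|\xi|^2\le\sum a_{ij}\xi_i\xi_j\le C|\xi|^2$ for all $\xi\in\mathbf{R}^n$. Viscosity solutions are in the standard sense. *)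

theory Defs
  imports "HOL-Analysis.Analysis"
begin

definition partial :: "'n::finite \<Rightarrow> (real^'n \<Rightarrow> real) \<Rightarrow> real^'n \<Rightarrow> real" where
  "partial i f x = deriv (\<lambda>t. f (x + t *\<^sub>R axis i 1)) 0"

fun Ck_on :: "nat \<Rightarrow> (real^'n::finite) set \<Rightarrow> (real^'n \<Rightarrow> real) \<Rightarrow> bool" where
  "Ck_on 0 U f = continuous_on U f"
| "Ck_on (Suc k) U f = (f differentiable_on U \<and> (\<forall>i. Ck_on k U (partial i f)))"

definition C_inf_on :: "(real^'n::finite) set \<Rightarrow> (real^'n \<Rightarrow> real) \<Rightarrow> bool" where
  "C_inf_on U f = (\<forall>k. Ck_on k U f)"

definition hess :: "(real^'n::finite \<Rightarrow> real) \<Rightarrow> real^'n \<Rightarrow> real^'n^'n" where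
  "hess f x = (\<chi> i j. partial i (partial j f) x)"

definition K :: "real \<Rightarrow> (real^'n::finite^'n) set" where
  "K C = {A. transpose A = A \<and>
            (\<forall>\<xi>. inverse C * (norm \<xi>)\<^sup>2 \<le> \<xi> \<bullet> (A *v \<xi>) \<and> \<xi> \<bullet> (A *v \<xi>) \<le> C * (norm \<xi>)\<^sup>2)}"

text \<open>Viscosity solutions of F(D^2 u) = 0 in an open set \<Omega> (F degenerate elliptic,
  nondecreasing in the matrix argument).\<close>
definition viscosity_subsolution ::
  "(real^'n::finite) set \<Rightarrow> (real^'n^'n \<Rightarrow> real) \<Rightarrow> (real^'n \<Rightarrow> real) \<Rightarrow> bool" where
  "viscosity_subsolution \<Omega> F u =
     (continuous_on \<Omega> u \<and>
      (\<forall>x0 \<in> \<Omega>. \<forall>U \<phi>. open U \<and> x0 \<in> U \<and> U \<subseteq> \<Omega> \<and> Ck_on 2 U \<phi> \<and>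
          (\<forall>x\<in>U. u x - \<phi> x \<le> u x0 - \<phi> x0) \<longrightarrow> F (hess \<phi> x0) \<ge> 0))"

definition viscosity_supersolution ::
  "(real^'n::finite) set \<Rightarrow> (real^'n^'n \<Rightarrow> real) \<Rightarrow> (real^'n \<Rightarrow> real) \<Rightarrow> bool" where
  "viscosity_supersolution \<Omega> F u =
     (continuous_on \<Omega> u \<and>
      (\<forall>x0 \<in> \<Omega>. \<forall>U \<phi>. open U \<and> x0 \<in> U \<and> U \<subseteq> \<Omega> \<and> Ck_on 2 U \<phi> \<and>
          (\<forall>x\<in>U. u x - \<phi> x \<ge> u x0 - \<phi> x0) \<longrightarrow> F (hess \<phi> x0) \<le> 0))"

definition viscosity_solution ::
  "(real^'n::finite) set \<Rightarrow> (real^'n^'n \<Rightarrow> real) \<Rightarrow> (real^'n \<Rightarrow> real) \<Rightarrow> bool" where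
  "viscosity_solution \<Omega> F u =
     (viscosity_subsolution \<Omega> F u \<and> viscosity_supersolution \<Omega> F u)"

text \<open>Isaacs operator sup_b inf_a Tr(A_ab M). A two-parameter family {A_ab} is
  represented by the collection \<B> of the sets {A_ab | a} (one for each b).\<close>
definition isaacs :: "(real^'n::finite^'n) set set \<Rightarrow> real^'n^'n \<Rightarrow> real" where
  "isaacs \<B> M = (SUP S\<in>\<B>. INF A\<in>S. trace (A ** M))"

end

(* For every pair x, y in the punctured unit ball choose A(x, y) in K_C annihilating both
   D^2 w(x) and D^2 w(y), and let F(M) = sup_y inf_x Tr(A(x, y) M). Then F(D^2 w(z)) = 0 for
   z <> 0: every inner infimum is at most Tr(A(z, y) D^2 w(z)) = 0, while the inner infimum for
   y = z vanishes identically. F is degenerate elliptic, because Tr(A N) >= 0 for A in K_C and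
   N positive semidefinite, and Lipschitz, because the entries of A are bounded by C.

   Away from the origin w is C^2, so the viscosity inequalities are the classical ones. At the
   origin w is only C^1 (as alpha > 1). There a test function phi touching w is replaced by
   phi(. - h) + eps |. - h|^2; if for some small h the difference to w attains its minimum at a
   point z <> 0, the Hessian comparison is transferred to z, where F(D^2 w(z)) = 0 and
   D^2 phi(z - h) is close to D^2 phi(0). Otherwise the minimum stays at 0 for all small h,
   which forces D^2 phi(0) to have all diagonal entries -2 eps (up to sign); this cannot happen
   for both eps and eps/2. *)

theory Submission
  imports Defs
begin

section \<open>Differential calculus on real^n\<close>

lemma has_derivative_along_line:
  fixes f :: "real^'n::finite \<Rightarrow> real"
  assumes "(f has_derivative D) (at (x + t *\<^sub>R v))"
  shows "((\<lambda>s. f (x + s *\<^sub>R v)) has_real_derivative D v) (at t)"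
proof -
  have "((\<lambda>s. x + s *\<^sub>R v) has_derivative (\<lambda>s. s *\<^sub>R v)) (at t)"
    by (auto intro!: derivative_eq_intros)
  from diff_chain_at[OF this assms]
  have "((\<lambda>s. f (x + s *\<^sub>R v)) has_derivative (\<lambda>s. D v * s)) (at t)"
    using linear_scale[OF has_derivative_linear[OF assms]] by (simp add: o_def mult.commute)
  then show ?thesis
    by (simp add: has_field_derivative_def)
qed

lemma partial_eq_has_derivative:
  fixes f :: "real^'n::finite \<Rightarrow> real"
  assumes "(f has_derivative D) (at x)"
  shows "partial i f x = D (axis i 1)"
  unfolding partial_def
  by (rule DERIV_imp_deriv) (use has_derivative_along_line[of f D x 0] assms in simp)

lemma linear_eq_sum_axis:
  fixes D :: "real^'n::finite \<Rightarrow> real"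
  assumes "linear D"
  shows "D v = (\<Sum>j\<in>UNIV. v$j * D (axis j 1))"
proof -
  have "D v = D (\<Sum>j\<in>UNIV. v$j *\<^sub>R axis j 1)"
    using basis_expansion[of v] by (simp add: scalar_mult_eq_scaleR)
  also have "\<dots> = (\<Sum>j\<in>UNIV. v$j * D (axis j 1))"
    using assms by (simp add: linear_sum linear_scale)
  finally show ?thesis .
qed

lemma has_real_derivative_along_line:
  fixes f :: "real^'n::finite \<Rightarrow> real"
  assumes "f differentiable (at (x + t *\<^sub>R v))"
  shows "((\<lambda>s. f (x + s *\<^sub>R v)) has_real_derivative
           (\<Sum>j\<in>UNIV. v$j * partial j f (x + t *\<^sub>R v))) (at t)"
proof -
  obtain D where D: "(f has_derivative D) (at (x + t *\<^sub>R v))"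
    using assms unfolding differentiable_def by blast
  have "D v = (\<Sum>j\<in>UNIV. v$j * partial j f (x + t *\<^sub>R v))"
    using linear_eq_sum_axis[OF has_derivative_linear[OF D], of v] partial_eq_has_derivative[OF D, symmetric]
    by simp
  with has_derivative_along_line[OF D] show ?thesis by simp
qed

lemma sum_axis_mult: "(\<Sum>j\<in>UNIV. axis i 1 $ j * f j) = (f i :: real)"
proof -
  have "axis i 1 $ j * f j = (if j = i then f j else 0)" for j
    by (simp add: axis_def)
  then show ?thesis by simp
qed

lemma Ck_on_2_imp_differentiable:
  assumes "Ck_on 2 U f" "open U" "x \<in> U"
  shows "f differentiable (at x)" "partial i f differentiable (at x)"
    and "continuous_on U (partial i (partial j f))"
  using assms by (auto simp: numeral_2_eq_2 differentiable_on_eq_differentiable_at)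

lemma isCont_hess:
  assumes "Ck_on 2 U \<phi>" "open U" "a \<in> U"
  shows "isCont (hess \<phi>) a"
proof -
  have "isCont (partial i (partial j \<phi>)) a" for i j
    using Ck_on_2_imp_differentiable(3)[OF assms] assms(2,3) continuous_on_eq_continuous_at by blast
  then show ?thesis
    unfolding isCont_def hess_def by (intro tendsto_vec_lambda) simp
qed

lemma Ck_on_2_punctured_continuous_on_UNIV:
  assumes "Ck_on 2 (-{a}) f" "f differentiable (at a)"
  shows "continuous_on UNIV f"
proof -
  have "continuous_on (-{a}) f"
    using assms(1) by (simp add: numeral_2_eq_2 differentiable_imp_continuous_on)
  moreover have "isCont f a" using assms(2) by (rule differentiable_imp_continuous_within)
  ultimately show ?thesis
    by (metis ComplI continuous_at_imp_continuous_on continuous_on_eq_continuous_at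
        open_Compl closed_singleton singletonD)
qed

lemma homogeneous_has_derivative_zero:
  fixes w :: "'a::euclidean_space \<Rightarrow> real"
  assumes "1 < \<alpha>" and cont: "continuous_on (-{0}) w"
    and hom: "\<And>t x. t > 0 \<Longrightarrow> w (t *\<^sub>R x) = t powr \<alpha> * w x"
  shows "(w has_derivative (\<lambda>_. 0)) (at 0)"
proof -
  have "w 0 = 2 powr \<alpha> * w 0" using hom[of 2 0] by simp
  moreover have "2 powr \<alpha> > (1::real)" using assms(1) by (simp add: gr_one_powr)
  ultimately have w0: "w 0 = 0" by (metis mult_cancel_right1 less_irrefl)
  have "compact (w ` sphere 0 1)"
    by (rule compact_continuous_image) (auto intro: continuous_on_subset[OF cont])
  then obtain B where B: "\<And>x. x \<in> sphere 0 1 \<Longrightarrow> \<bar>w x\<bar> \<le> B"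
    using compact_imp_bounded bounded_iff by (metis image_eqI real_norm_def)
  have bound: "\<bar>w h\<bar> / norm h \<le> B * norm h powr (\<alpha> - 1)" if "h \<noteq> 0" for h
  proof -
    have "w h = norm h powr \<alpha> * w (h /\<^sub>R norm h)"
      using hom[of "norm h" "h /\<^sub>R norm h"] that by simp
    then have "\<bar>w h\<bar> \<le> norm h powr \<alpha> * B"
      using B[of "h /\<^sub>R norm h"] that by (simp add: abs_mult mult_left_mono)
    then show ?thesis
      using that by (simp add: divide_le_eq powr_diff mult.commute)
  qed
  have "((\<lambda>h. B * norm h powr (\<alpha> - 1)) \<longlongrightarrow> B * 0) (at 0)"
    by (intro tendsto_mult tendsto_const tendsto_zero_powrI)
       (use assms(1) in \<open>auto intro!: tendsto_eq_intros\<close>)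
  then have "((\<lambda>h. B * norm h powr (\<alpha> - 1)) \<longlongrightarrow> 0) (at 0)" by simp
  then have "((\<lambda>h. \<bar>w h\<bar> / norm h) \<longlongrightarrow> 0) (at 0)"
  proof (rule Lim_null_comparison[rotated])
    show "\<forall>\<^sub>F h in at 0. norm (\<bar>w h\<bar> / norm h) \<le> B * norm h powr (\<alpha> - 1)"
      unfolding eventually_at_filter by (rule always_eventually) (use bound in auto)
  qed
  then show ?thesis
    unfolding has_derivative_at using w0 by simp
qed

lemma norm_add_scaleR_power2:
  fixes a v :: "'a::real_inner"
  shows "(norm (a + t *\<^sub>R v))\<^sup>2 = (norm a)\<^sup>2 + 2 * t * (a \<bullet> v) + t\<^sup>2 * (norm v)\<^sup>2"
proof -
  have "(norm (a + t *\<^sub>R v))\<^sup>2 = a \<bullet> a + 2 * t * (a \<bullet> v) + t\<^sup>2 * (v \<bullet> v)"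
    unfolding power2_norm_eq_inner
    by (simp add: inner_add_left inner_add_right inner_commute power2_eq_square algebra_simps)
  then show ?thesis by (simp add: power2_norm_eq_inner)
qed

lemma inner_matrix_vector_eq_sum:
  "v \<bullet> (M *v v) = (\<Sum>i\<in>UNIV. \<Sum>j\<in>UNIV. v$i * M$i$j * v$j)"
  by (simp add: inner_vec_def matrix_vector_mult_def sum_distrib_left mult_ac)

lemma second_derivative_along_line:
  fixes f :: "real^'n::finite \<Rightarrow> real"
  assumes "Ck_on 2 U f" "open U" "a \<in> U"
  obtains d where "d > 0"
    and "\<And>t. \<bar>t\<bar> < d \<Longrightarrow> ((\<lambda>s. f (a + s *\<^sub>R v)) has_real_derivative
           (\<Sum>j\<in>UNIV. v$j * partial j f (a + t *\<^sub>R v))) (at t)"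
    and "((\<lambda>t. \<Sum>j\<in>UNIV. v$j * partial j f (a + t *\<^sub>R v)) has_real_derivative
           v \<bullet> (hess f a *v v)) (at 0)"
proof -
  obtain e where e: "e > 0" "ball a e \<subseteq> U"
    using assms(2,3) open_contains_ball by blast
  define d where "d = e / (norm v + 1)"
  have nv: "norm v + 1 > 0" using norm_ge_zero[of v] by linarith
  have d: "d > 0" using e nv by (simp add: d_def)
  have first: "((\<lambda>s. f (a + s *\<^sub>R v)) has_real_derivative
           (\<Sum>j\<in>UNIV. v$j * partial j f (a + t *\<^sub>R v))) (at t)" if "\<bar>t\<bar> < d" for t
  proof (rule has_real_derivative_along_line, rule Ck_on_2_imp_differentiable(1)[OF assms(1,2)])
    have "\<bar>t\<bar> * norm v \<le> \<bar>t\<bar> * (norm v + 1)" by (simp add: mult_left_mono)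
    also have "\<dots> < e" using that nv by (simp add: d_def less_divide_eq)
    finally show "a + t *\<^sub>R v \<in> U" using e(2) by (auto simp: dist_norm)
  qed
  have "((\<lambda>t. partial j f (a + t *\<^sub>R v)) has_real_derivative
          (\<Sum>i\<in>UNIV. v$i * partial i (partial j f) a)) (at 0)" for j
    using has_real_derivative_along_line[of "partial j f" a 0 v]
      Ck_on_2_imp_differentiable(2)[OF assms] by simp
  then have "((\<lambda>t. \<Sum>j\<in>UNIV. v$j * partial j f (a + t *\<^sub>R v)) has_real_derivative
           (\<Sum>j\<in>UNIV. v$j * (\<Sum>i\<in>UNIV. v$i * partial i (partial j f) a))) (at 0)"
    by (auto intro!: DERIV_sum DERIV_cmult)
  moreover have "(\<Sum>j\<in>UNIV. v$j * (\<Sum>i\<in>UNIV. v$i * partial i (partial j f) a))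
      = v \<bullet> (hess f a *v v)"
    unfolding inner_matrix_vector_eq_sum hess_def
    by (subst sum.swap) (simp add: sum_distrib_left mult_ac)
  ultimately show thesis by (intro that[OF d first]) simp_all
qed

lemma local_min_second_derivative_nonneg:
  fixes G G' :: "real \<Rightarrow> real"
  assumes "\<delta> > 0" and G': "\<And>t. \<bar>t\<bar> < \<delta> \<Longrightarrow> (G has_real_derivative G' t) (at t)"
    and G'': "(G' has_real_derivative c) (at 0)"
    and min: "\<And>t. \<bar>t\<bar> < \<delta> \<Longrightarrow> G 0 \<le> G t"
  shows "c \<ge> 0"
proof (rule ccontr)
  assume "\<not> c \<ge> 0"
  then obtain d where d: "d > 0" "\<And>h. 0 < h \<Longrightarrow> h < d \<Longrightarrow> G' h < G' 0"
    using DERIV_neg_dec_right[OF G''] by (metis add_0 not_le)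
  have "G' 0 = 0"
    by (rule DERIV_local_min[OF G' assms(1)]) (use assms(1) min in auto)
  define t where "t = min d \<delta> / 2"
  have t: "0 < t" "t < d" "t < \<delta>" using d assms(1) by (auto simp: t_def)
  have "\<And>x. 0 \<le> x \<Longrightarrow> x \<le> t \<Longrightarrow> (G has_real_derivative G' x) (at x)"
    using G' t by simp
  then obtain z where z: "0 < z" "z < t" "G t - G 0 = (t - 0) * G' z"
    using MVT2[OF t(1)] by blast
  have "G' z < 0" using d(2)[of z] z t \<open>G' 0 = 0\<close> by simp
  then have "t * G' z < 0" using t(1) by (simp add: mult_pos_neg)
  then have "G t < G 0" using z(3) by simp
  with min[of t] t show False by simp
qed

lemma touching_hess_ineq:
  fixes \<psi> g :: "real^'n::finite \<Rightarrow> real"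
  assumes \<psi>: "Ck_on 2 U \<psi>" "open U" "a \<in> U" and g: "Ck_on 2 V g" "open V" "z \<in> V"
    and "\<delta> > 0"
    and min: "\<And>h. norm h < \<delta> \<Longrightarrow>
      \<sigma> * (\<psi> a - g z) + \<epsilon> * (norm a)\<^sup>2 \<le> \<sigma> * (\<psi> (a + h) - g (z + h)) + \<epsilon> * (norm (a + h))\<^sup>2"
  shows "0 \<le> \<sigma> * (v \<bullet> ((hess \<psi> a - hess g z) *v v)) + 2 * \<epsilon> * (norm v)\<^sup>2"
proof -
  define D\<psi> where "D\<psi> t = (\<Sum>j\<in>UNIV. v$j * partial j \<psi> (a + t *\<^sub>R v))" for t
  define Dg where "Dg t = (\<Sum>j\<in>UNIV. v$j * partial j g (z + t *\<^sub>R v))" for t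
  obtain d1 where d1: "d1 > 0"
    "\<And>t. \<bar>t\<bar> < d1 \<Longrightarrow> ((\<lambda>s. \<psi> (a + s *\<^sub>R v)) has_real_derivative D\<psi> t) (at t)"
    "(D\<psi> has_real_derivative v \<bullet> (hess \<psi> a *v v)) (at 0)"
    using second_derivative_along_line[OF \<psi>, of v] unfolding D\<psi>_def by blast
  obtain d2 where d2: "d2 > 0"
    "\<And>t. \<bar>t\<bar> < d2 \<Longrightarrow> ((\<lambda>s. g (z + s *\<^sub>R v)) has_real_derivative Dg t) (at t)"
    "(Dg has_real_derivative v \<bullet> (hess g z *v v)) (at 0)"
    using second_derivative_along_line[OF g, of v] unfolding Dg_def by blast
  have nv: "norm v + 1 > 0" using norm_ge_zero[of v] by linarith
  define d where "d = min (min d1 d2) (\<delta> / (norm v + 1))"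
  have d: "d > 0" using d1 d2 nv \<open>\<delta> > 0\<close> by (simp add: d_def)
  define G where "G t = \<sigma> * (\<psi> (a + t *\<^sub>R v) - g (z + t *\<^sub>R v))
      + \<epsilon> * ((norm a)\<^sup>2 + 2 * t * (a \<bullet> v) + t\<^sup>2 * (norm v)\<^sup>2)" for t
  define G' where "G' t = \<sigma> * (D\<psi> t - Dg t) + \<epsilon> * (2 * (a \<bullet> v) + 2 * t * (norm v)\<^sup>2)" for t
  have "0 \<le> \<sigma> * (v \<bullet> (hess \<psi> a *v v) - v \<bullet> (hess g z *v v)) + \<epsilon> * (2 * (norm v)\<^sup>2)"
  proof (rule local_min_second_derivative_nonneg[OF d, of G G'])
    show "(G has_real_derivative G' t) (at t)" if "\<bar>t\<bar> < d" for t
      unfolding G_def G'_def using that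
      by (auto intro!: derivative_eq_intros d1(2) d2(2) simp: d_def)
    show "(G' has_real_derivative
        \<sigma> * (v \<bullet> (hess \<psi> a *v v) - v \<bullet> (hess g z *v v)) + \<epsilon> * (2 * (norm v)\<^sup>2)) (at 0)"
      unfolding G'_def by (auto intro!: derivative_eq_intros d1(3) d2(3))
    show "G 0 \<le> G t" if "\<bar>t\<bar> < d" for t
    proof -
      have "\<bar>t\<bar> * norm v \<le> \<bar>t\<bar> * (norm v + 1)" by (simp add: mult_left_mono)
      also have "\<dots> < \<delta>" using that nv by (simp add: d_def less_divide_eq)
      finally have "norm (t *\<^sub>R v) < \<delta>" by simp
      from min[OF this] show ?thesis
        unfolding G_def norm_add_scaleR_power2 by simp
    qed
  qed
  then show ?thesis
    by (simp add: matrix_vector_mult_diff_rdistrib inner_diff_right algebra_simps)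
qed

section \<open>Positive semidefinite matrices and traces\<close>

definition psd_matrix :: "real^'n::finite^'n \<Rightarrow> bool" where
  "psd_matrix M \<longleftrightarrow> (\<forall>v. 0 \<le> v \<bullet> (M *v v))"

lemma quadratic_form_diff:
  fixes v :: "real^'n::finite"
  shows "v \<bullet> ((M - N) *v v) = v \<bullet> (M *v v) - v \<bullet> (N *v v)"
  by (simp add: matrix_vector_mult_diff_rdistrib inner_diff_right)

lemma quadratic_form_scaleR_id:
  fixes v :: "real^'n::finite"
  shows "v \<bullet> ((c *\<^sub>R mat 1) *v v) = c * (norm v)\<^sup>2"
proof -
  have "(c *\<^sub>R mat 1) *v v = c *\<^sub>R v"
    by (simp flip: scaleR_matrix_vector_assoc)
  then show ?thesis by (simp add: power2_norm_eq_inner)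
qed

lemma symmetric_matrix_nth: "transpose A = A \<Longrightarrow> A$i$j = A$j$i"
  by (metis transpose_def vec_lambda_beta)

lemma quadratic_form_add_axis:
  fixes A :: "real^'n::finite^'n"
  assumes "transpose A = A"
  shows "(x + c *\<^sub>R axis k 1) \<bullet> (A *v (x + c *\<^sub>R axis k 1))
    = x \<bullet> (A *v x) + 2 * c * (A *v x)$k + c\<^sup>2 * A$k$k"
proof -
  have "x \<bullet> (A *v axis k 1) = (A *v x)$k"
    using assms by (metis dot_lmul_matrix inner_axis inner_real_def mult.right_neutral
        transpose_matrix_vector)
  moreover have "axis k 1 \<bullet> (A *v x) = (A *v x)$k"
    by (simp add: inner_axis')
  moreover have "axis k 1 \<bullet> (A *v axis k 1) = A$k$k"
    by (simp add: inner_axis' matrix_vector_mult_basis column_def)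
  ultimately show ?thesis
    by (simp add: algebra_simps inner_add_left inner_add_right power2_eq_square)
qed

lemma quadratic_form_rank_one_update:
  fixes A :: "real^'n::finite^'n"
  shows "x \<bullet> ((\<chi> i j. A$i$j - b$i * b$j / s) *v x) = x \<bullet> (A *v x) - (b \<bullet> x)\<^sup>2 / s"
proof -
  have "(b \<bullet> x)\<^sup>2 = (\<Sum>i\<in>UNIV. \<Sum>j\<in>UNIV. x$i * (b$i * b$j) * x$j)"
    by (simp add: inner_vec_def power2_eq_square sum_product mult_ac)
  then show ?thesis
    by (simp add: inner_matrix_vector_eq_sum algebra_simps sum_subtractf sum_divide_distrib)
qed

lemma sum_insert_square:
  assumes "finite I" "k \<notin> I"
  shows "(\<Sum>i\<in>insert k I. \<Sum>j\<in>insert k I. f i j) =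
    f k k + (\<Sum>j\<in>I. f k j) + (\<Sum>i\<in>I. f i k) + (\<Sum>i\<in>I. \<Sum>j\<in>I. f i j)"
  using assms by (simp add: sum.distrib algebra_simps)

lemma psd_zero_diagonal_imp_zero_entry:
  fixes A :: "real^'n::finite^'n"
  assumes "transpose A = A" "A$k$k = 0"
    and psd: "\<And>t. 0 \<le> (axis j 1 + t *\<^sub>R axis k 1) \<bullet> (A *v (axis j 1 + t *\<^sub>R axis k 1))"
  shows "A$k$j = 0"
proof (rule ccontr)
  assume nz: "A$k$j \<noteq> 0"
  define t where "t = -(A$j$j + 1) / (2 * A$k$j)"
  have "(axis j 1 + t *\<^sub>R axis k 1) \<bullet> (A *v (axis j 1 + t *\<^sub>R axis k 1)) = A$j$j + 2 * t * A$k$j"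
    using quadratic_form_add_axis[OF assms(1), of "axis j 1" t k]
      quadratic_form_add_axis[OF assms(1), of 0 1 j] assms(2)
    by (simp add: matrix_vector_mult_basis column_def)
  also have "\<dots> = -1"
    using nz by (simp add: t_def field_simps)
  finally show False using psd[of t] by linarith
qed

lemma schur_complement_quadratic_form:
  fixes A :: "real^'n::finite^'n"
  assumes "transpose A = A" "A$k$k \<noteq> 0"
  shows "x \<bullet> ((\<chi> i j. A$i$j - A$i$k * A$j$k / A$k$k) *v x)
    = (x - ((A *v x)$k / A$k$k) *\<^sub>R axis k 1) \<bullet> (A *v (x - ((A *v x)$k / A$k$k) *\<^sub>R axis k 1))"
proof -
  define r where "r = (A *v x)$k"
  have "(\<chi> i. A$i$k) \<bullet> x = r"
    using symmetric_matrix_nth[OF assms(1)]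
    by (simp add: r_def inner_vec_def matrix_vector_mult_def mult.commute)
  then have "x \<bullet> ((\<chi> i j. A$i$j - A$i$k * A$j$k / A$k$k) *v x) = x \<bullet> (A *v x) - r\<^sup>2 / A$k$k"
    using quadratic_form_rank_one_update[where A=A and b="\<chi> i. A$i$k" and s="A$k$k" and x=x]
    by simp
  moreover have "(x + (- r / A$k$k) *\<^sub>R axis k 1) \<bullet> (A *v (x + (- r / A$k$k) *\<^sub>R axis k 1))
      = x \<bullet> (A *v x) - r\<^sup>2 / A$k$k"
    using quadratic_form_add_axis[OF assms(1), of x "- r / A$k$k" k] assms(2)
    unfolding r_def[symmetric] by (simp add: power2_eq_square field_simps)
  ultimately show ?thesis by (simp add: r_def)
qed

lemma psd_matrix_sum_on_nonneg:
  fixes N :: "real^'n::finite^'n"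
  assumes "psd_matrix N"
  shows "0 \<le> (\<Sum>i\<in>J. \<Sum>j\<in>J. c i * c j * N$j$i)"
proof -
  define b where "b = (\<chi> i. if i \<in> J then c i else 0)"
  have "(\<Sum>j\<in>J. c i * c j * N$j$i) = (\<Sum>j\<in>UNIV. b$i * b$j * N$j$i)" if "i \<in> J" for i
    using that by (intro sum.mono_neutral_cong_left) (auto simp: b_def)
  then have "(\<Sum>i\<in>J. \<Sum>j\<in>J. c i * c j * N$j$i) = (\<Sum>i\<in>UNIV. \<Sum>j\<in>UNIV. b$i * b$j * N$j$i)"
    by (intro sum.mono_neutral_cong_left) (auto simp: b_def)
  also have "\<dots> = b \<bullet> (N *v b)"
    unfolding inner_matrix_vector_eq_sum by (subst sum.swap) (simp add: mult_ac)
  finally show ?thesis using assms by (simp add: psd_matrix_def)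
qed

(* Induction over the support: a coordinate k with A_kk > 0 is eliminated by the Schur
   complement, i.e. this is an LDL^T factorisation of A in disguise. *)
lemma psd_trace_sum_nonneg_on:
  fixes A N :: "real^'n::finite^'n"
  assumes "finite I" "transpose A = A"
    and "\<And>x. (\<And>i. i \<notin> I \<Longrightarrow> x$i = 0) \<Longrightarrow> 0 \<le> x \<bullet> (A *v x)"
    and N: "psd_matrix N"
  shows "0 \<le> (\<Sum>i\<in>I. \<Sum>j\<in>I. A$i$j * N$j$i)"
  using assms(1-3)
proof (induction I arbitrary: A rule: finite_induct)
  case empty
  then show ?case by simp
next
  case (insert k I)
  note sym = insert.prems(1) and psd = insert.prems(2)
  let ?J = "insert k I"
  have Akk: "A$k$k \<ge> 0"
    using psd[of "axis k 1"] quadratic_form_add_axis[OF sym, of 0 1 k] by (simp add: axis_def)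
  show ?case
  proof (cases "A$k$k = 0")
    case True
    have row: "A$k$j = 0" if "j \<in> I" for j
    proof (rule psd_zero_diagonal_imp_zero_entry[OF sym True])
      fix t
      show "0 \<le> (axis j 1 + t *\<^sub>R axis k 1) \<bullet> (A *v (axis j 1 + t *\<^sub>R axis k 1))"
        by (rule psd) (use that insert.hyps(2) in \<open>auto simp: axis_def\<close>)
    qed
    with symmetric_matrix_nth[OF sym] have "A$j$k = 0" if "j \<in> I" for j
      using that by metis
    with row have "(\<Sum>i\<in>?J. \<Sum>j\<in>?J. A$i$j * N$j$i) = (\<Sum>i\<in>I. \<Sum>j\<in>I. A$i$j * N$j$i)"
      using sum_insert_square[OF insert.hyps, of "\<lambda>i j. A$i$j * N$j$i"] True by simp
    also have "\<dots> \<ge> 0"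
      by (rule insert.IH[OF sym]) (use psd in auto)
    finally show ?thesis .
  next
    case False
    define A' where "A' = (\<chi> i j. A$i$j - A$i$k * A$j$k / A$k$k)"
    have symA': "transpose A' = A'"
      using symmetric_matrix_nth[OF sym] by (simp add: A'_def transpose_def vec_eq_iff mult.commute)
    have "A'$k$j = 0" "A'$j$k = 0" for j
      using False symmetric_matrix_nth[OF sym] by (auto simp: A'_def)
    then have "(\<Sum>i\<in>?J. \<Sum>j\<in>?J. A'$i$j * N$j$i) = (\<Sum>i\<in>I. \<Sum>j\<in>I. A'$i$j * N$j$i)"
      using sum_insert_square[OF insert.hyps, of "\<lambda>i j. A'$i$j * N$j$i"] by simp
    also have "\<dots> \<ge> 0"
    proof (rule insert.IH[OF symA'])
      fix x :: "real^'n" assume "\<And>i. i \<notin> I \<Longrightarrow> x$i = 0"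
      then show "0 \<le> x \<bullet> (A' *v x)"
        unfolding A'_def schur_complement_quadratic_form[OF sym False]
        by (intro psd) (auto simp: axis_def)
    qed
    finally have "0 \<le> (\<Sum>i\<in>?J. \<Sum>j\<in>?J. A'$i$j * N$j$i)" .
    moreover have "0 \<le> (\<Sum>i\<in>?J. \<Sum>j\<in>?J. A$i$k * A$j$k * N$j$i) / A$k$k"
      using psd_matrix_sum_on_nonneg[OF N] Akk by simp
    moreover have "(\<Sum>i\<in>?J. \<Sum>j\<in>?J. A$i$j * N$j$i) =
        (\<Sum>i\<in>?J. \<Sum>j\<in>?J. A'$i$j * N$j$i) + (\<Sum>i\<in>?J. \<Sum>j\<in>?J. A$i$k * A$j$k * N$j$i) / A$k$k"
      unfolding A'_def using False
      by (simp add: algebra_simps sum.distrib sum_subtractf sum_divide_distrib diff_divide_distrib)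
    ultimately show ?thesis by linarith
  qed
qed

lemma trace_mult_psd_nonneg:
  fixes A N :: "real^'n::finite^'n"
  assumes "transpose A = A" "psd_matrix A" "psd_matrix N"
  shows "0 \<le> trace (A ** N)"
proof -
  have "0 \<le> (\<Sum>i\<in>UNIV. \<Sum>j\<in>UNIV. A$i$j * N$j$i)"
    using assms by (intro psd_trace_sum_nonneg_on) (auto simp: psd_matrix_def)
  then show ?thesis by (simp add: trace_def matrix_matrix_mult_def)
qed

section \<open>The class K_C and Isaacs operators\<close>

lemma K_transpose: "A \<in> K C \<Longrightarrow> transpose A = A"
  by (simp add: K_def)

lemma K_quadratic_form_le: "A \<in> K C \<Longrightarrow> v \<bullet> (A *v v) \<le> C * (norm v)\<^sup>2"
  by (simp add: K_def)

lemma K_psd_matrix: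
  fixes A :: "real^'n::finite^'n"
  assumes "C > 0" "A \<in> K C"
  shows "psd_matrix A"
  unfolding psd_matrix_def
proof
  fix v :: "real^'n"
  have "0 \<le> inverse C * (norm v)\<^sup>2" using assms(1) by simp
  also have "\<dots> \<le> v \<bullet> (A *v v)" using assms(2) by (simp add: K_def)
  finally show "0 \<le> v \<bullet> (A *v v)" .
qed

lemma K_nth_bound:
  fixes A :: "real^'n::finite^'n"
  assumes C: "C > 0" and A: "A \<in> K C"
  shows "\<bar>A$j$i\<bar> \<le> C"
proof -
  define u :: "real \<Rightarrow> real^'n" where "u c = axis i 1 + c *\<^sub>R axis j 1" for c
  have q: "u c \<bullet> (A *v u c) = A$i$i + 2 * c * A$j$i + c\<^sup>2 * A$j$j" for c
    using quadratic_form_add_axis[OF K_transpose[OF A], of "axis i 1" c j]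
      quadratic_form_add_axis[OF K_transpose[OF A], of 0 1 i]
    by (simp add: u_def matrix_vector_mult_basis column_def)
  have upper: "u c \<bullet> (A *v u c) \<le> 4 * C" if "\<bar>c\<bar> = 1" for c
  proof -
    have "norm (u c) \<le> 2"
      using norm_triangle_ineq[of "axis i 1 :: real^'n" "c *\<^sub>R axis j 1"] that by (simp add: u_def)
    then have "(norm (u c))\<^sup>2 \<le> 2\<^sup>2"
      by (intro power_mono) simp_all
    then have "C * (norm (u c))\<^sup>2 \<le> C * 4"
      using C by (intro mult_left_mono) simp_all
    then show ?thesis using K_quadratic_form_le[OF A, of "u c"] by simp
  qed
  have lower: "0 \<le> u c \<bullet> (A *v u c)" for c
    using K_psd_matrix[OF C A] by (simp add: psd_matrix_def)
  show ?thesis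
    using upper[of 1] upper[of "-1"] lower[of 1] lower[of "-1"] q[of 1] q[of "-1"]
    by (simp add: abs_le_iff)
qed

lemma trace_mult_K_bound:
  fixes M :: "real^'n::finite^'n"
  assumes "C > 0" "A \<in> K C"
  shows "\<bar>trace (A ** M)\<bar> \<le> C * CARD('n)\<^sup>2 * norm M"
proof -
  have "\<bar>trace (A ** M)\<bar> \<le> (\<Sum>i\<in>UNIV. \<Sum>j\<in>UNIV. \<bar>A$i$j\<bar> * \<bar>M$j$i\<bar>)"
    unfolding trace_def matrix_matrix_mult_def
    by (auto intro!: order_trans[OF sum_abs] sum_mono simp: abs_mult)
  also have "\<dots> \<le> (\<Sum>i\<in>(UNIV::'n set). \<Sum>j\<in>(UNIV::'n set). C * norm M)"
  proof (intro sum_mono mult_mono)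
    fix i j :: 'n
    show "\<bar>A$i$j\<bar> \<le> C" using K_nth_bound[OF assms] .
    have "\<bar>M$j$i\<bar> \<le> norm (M$j)" by (rule component_le_norm_cart)
    also have "\<dots> \<le> norm M" by (rule Finite_Cartesian_Product.norm_nth_le)
    finally show "\<bar>M$j$i\<bar> \<le> norm M" .
  qed (use assms(1) in auto)
  also have "\<dots> = C * CARD('n)\<^sup>2 * norm M"
    by (simp add: power2_eq_square)
  finally show ?thesis .
qed

lemma trace_mult_K_mono:
  assumes "C > 0" "A \<in> K C" "psd_matrix (M' - M)"
  shows "trace (A ** M) \<le> trace (A ** M')"
  using trace_mult_psd_nonneg[OF K_transpose[OF assms(2)] K_psd_matrix[OF assms(1,2)] assms(3)]
  by (simp add: matrix_add_ldistrib[of A "M' - M" M, simplified] trace_add)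

lemma trace_mult_K_bdd_below:
  fixes M :: "real^'n::finite^'n"
  assumes "C > 0" "S \<subseteq> K C"
  shows "bdd_below ((\<lambda>A. trace (A ** M)) ` S)"
proof (rule bdd_belowI)
  fix x assume "x \<in> (\<lambda>A. trace (A ** M)) ` S"
  then obtain A where "A \<in> K C" "x = trace (A ** M)" using assms(2) by blast
  then show "- (C * CARD('n)\<^sup>2 * norm M) \<le> x"
    using trace_mult_K_bound[OF assms(1), where A=A and M=M] by (simp add: abs_le_iff)
qed

lemma SUP_INF_le_add:
  fixes f g :: "'a \<Rightarrow> real"
  assumes "B \<noteq> {}" "\<And>S. S \<in> B \<Longrightarrow> S \<noteq> {}"
    and bound: "\<And>S A. S \<in> B \<Longrightarrow> A \<in> S \<Longrightarrow> \<bar>f A\<bar> \<le> c \<and> \<bar>g A\<bar> \<le> c"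
    and le: "\<And>S A. S \<in> B \<Longrightarrow> A \<in> S \<Longrightarrow> f A \<le> g A + d"
  shows "(SUP S\<in>B. INF A\<in>S. f A) \<le> (SUP S\<in>B. INF A\<in>S. g A) + d"
proof (rule cSUP_least[OF assms(1)])
  fix S assume S: "S \<in> B"
  obtain A0 where A0: "A0 \<in> S" using assms(2)[OF S] by blast
  have "-c \<le> f A \<and> -c \<le> g A" if "A \<in> S" for A
    using bound[OF S that] by (simp add: abs_le_iff)
  then have "bdd_below (f ` S)" "bdd_below (g ` S)"
    by (auto intro!: bdd_belowI[of _ "-c"])
  then have "(INF A\<in>S. f A) - d \<le> (INF A\<in>S. g A)"
    using le[OF S] by (intro cINF_greatest[OF assms(2)[OF S]]) (smt (verit) cINF_lower)
  also have "(INF A\<in>S. g A) \<le> (SUP S\<in>B. INF A\<in>S. g A)"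
  proof (rule cSUP_upper[OF S], rule bdd_aboveI)
    fix y assume "y \<in> (\<lambda>S. INF A\<in>S. g A) ` B"
    then obtain S' where S': "S' \<in> B" "y = (INF A\<in>S'. g A)" by blast
    obtain A' where "A' \<in> S'" using assms(2)[OF S'(1)] by blast
    moreover have "bdd_below (g ` S')"
      using bound[OF S'(1)] by (intro bdd_belowI[of _ "-c"]) (force simp: abs_le_iff)
    ultimately show "y \<le> c"
      using S' cINF_lower bound[OF S'(1)] by (smt (verit))
  qed
  finally show "(INF A\<in>S. f A) \<le> (SUP S\<in>B. INF A\<in>S. g A) + d" by simp
qed

lemma isaacs_le_add:
  fixes M M' :: "real^'n::finite^'n"
  assumes "C > 0" "B \<noteq> {}" "\<And>S. S \<in> B \<Longrightarrow> S \<noteq> {} \<and> S \<subseteq> K C"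
    and "\<And>A. A \<in> K C \<Longrightarrow> trace (A ** M) \<le> trace (A ** M') + d"
  shows "isaacs B M \<le> isaacs B M' + d"
  unfolding isaacs_def
proof (rule SUP_INF_le_add[where c = "C * CARD('n)\<^sup>2 * max (norm M) (norm M')"])
  fix S A assume "S \<in> B" "A \<in> S"
  then have A: "A \<in> K C" using assms(3) by blast
  have "C * CARD('n)\<^sup>2 * norm N \<le> C * CARD('n)\<^sup>2 * max (norm M) (norm M')"
    if "N = M \<or> N = M'" for N :: "real^'n^'n"
    using that assms(1) by (intro mult_left_mono) auto
  then show "\<bar>trace (A ** M)\<bar> \<le> C * CARD('n)\<^sup>2 * max (norm M) (norm M') \<and>
      \<bar>trace (A ** M')\<bar> \<le> C * CARD('n)\<^sup>2 * max (norm M) (norm M')"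
    using trace_mult_K_bound[OF assms(1) A, of M] trace_mult_K_bound[OF assms(1) A, of M']
    by fastforce
qed (use assms in auto)

lemma isaacs_mono:
  assumes "C > 0" "B \<noteq> {}" "\<And>S. S \<in> B \<Longrightarrow> S \<noteq> {} \<and> S \<subseteq> K C"
    and "psd_matrix (M' - M)"
  shows "isaacs B M \<le> isaacs B M'"
  using isaacs_le_add[OF assms(1-3), of M M' 0] trace_mult_K_mono[OF assms(1) _ assms(4)] by simp

lemma isaacs_le_add_norm:
  fixes M M' :: "real^'n::finite^'n"
  assumes "C > 0" "B \<noteq> {}" "\<And>S. S \<in> B \<Longrightarrow> S \<noteq> {} \<and> S \<subseteq> K C"
  shows "isaacs B M \<le> isaacs B M' + C * CARD('n)\<^sup>2 * norm (M - M')"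
proof (rule isaacs_le_add[OF assms])
  fix A :: "real^'n^'n" assume "A \<in> K C"
  then have "trace (A ** (M - M')) \<le> C * CARD('n)\<^sup>2 * norm (M - M')"
    using trace_mult_K_bound[OF assms(1)] abs_le_D1 by blast
  then show "trace (A ** M) \<le> trace (A ** M') + C * CARD('n)\<^sup>2 * norm (M - M')"
    using matrix_add_ldistrib[of A "M - M'" M'] by (simp add: trace_add)
qed

lemma isaacs_eq_0:
  fixes M :: "real^'n::finite^'n"
  assumes "C > 0" "\<And>S. S \<in> B \<Longrightarrow> S \<noteq> {} \<and> S \<subseteq> K C"
    and some: "\<And>S. S \<in> B \<Longrightarrow> \<exists>A\<in>S. trace (A ** M) = 0"
    and all: "S0 \<in> B" "\<And>A. A \<in> S0 \<Longrightarrow> trace (A ** M) = 0"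
  shows "isaacs B M = 0"
proof -
  have bdd: "bdd_below ((\<lambda>A. trace (A ** M)) ` S)" if "S \<in> B" for S
    by (rule trace_mult_K_bdd_below[OF assms(1)]) (use assms(2)[OF that] in blast)
  have INF_le_0: "(INF A\<in>S. trace (A ** M)) \<le> 0" if "S \<in> B" for S
    using some[OF that] cINF_lower[OF bdd[OF that]] by fastforce
  have "isaacs B M \<le> 0"
    unfolding isaacs_def using all(1) INF_le_0 by (intro cSUP_least) auto
  moreover have "(INF A\<in>S0. trace (A ** M)) = 0"
    using INF_le_0[OF all(1)] assms(2)[OF all(1)] all(2) by (intro antisym cINF_greatest) auto
  then have "0 \<le> isaacs B M"
    unfolding isaacs_def using INF_le_0 all(1)
    by (metis (no_types, lifting) bdd_aboveI2 cSUP_upper)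
  ultimately show ?thesis by simp
qed

section \<open>Test functions touching at the origin\<close>

lemma uniformly_small_translation:
  fixes \<phi> :: "real^'n::finite \<Rightarrow> real"
  assumes "continuous_on (cball 0 (2 * r)) \<phi>" "r > 0" "\<theta> > 0"
  obtains \<kappa> where "0 < \<kappa>" "\<kappa> \<le> r"
    and "\<And>h x. norm h < \<kappa> \<Longrightarrow> norm x \<le> r \<Longrightarrow>
           \<bar>\<phi> (x - h) - \<phi> x\<bar> < \<theta> \<and> \<bar>(norm (x - h))\<^sup>2 - (norm x)\<^sup>2\<bar> < \<theta>"
proof -
  obtain \<kappa>0 where \<kappa>0: "\<kappa>0 > 0"
    "\<And>x x'. x \<in> cball 0 (2 * r) \<Longrightarrow> x' \<in> cball 0 (2 * r) \<Longrightarrow> dist x' x < \<kappa>0 \<Longrightarrow>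
       dist (\<phi> x') (\<phi> x) < \<theta>"
    using compact_uniformly_continuous[OF assms(1) compact_cball] assms(3)
    unfolding uniformly_continuous_on_def by metis
  define \<kappa> where "\<kappa> = min \<kappa>0 (min r (\<theta> / (3 * r)))"
  have \<kappa>: "0 < \<kappa>" "\<kappa> \<le> r" "\<kappa> \<le> \<kappa>0"
    using \<kappa>0 assms(2,3) by (auto simp: \<kappa>_def)
  have "\<kappa> \<le> \<theta> / (3 * r)" by (simp add: \<kappa>_def)
  then have "3 * r * \<kappa> \<le> \<theta>" using assms(2) by (simp add: field_simps)
  show thesis
  proof (rule that[OF \<kappa>(1,2)], intro conjI)
    fix h x :: "real^'n" assume h: "norm h < \<kappa>" and x: "norm x \<le> r"
    have "norm (x - h) \<le> 2 * r" using norm_triangle_ineq4[of x h] h x \<kappa> by linarith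
    then show "\<bar>\<phi> (x - h) - \<phi> x\<bar> < \<theta>"
      using \<kappa>0(2)[of x "x - h"] h x \<kappa> assms(2) by (simp add: dist_norm norm_minus_commute)
    have "\<bar>(norm (x - h))\<^sup>2 - (norm x)\<^sup>2\<bar> = \<bar>(norm h)\<^sup>2 - 2 * (x \<bullet> h)\<bar>"
      using norm_add_scaleR_power2[of x "-1" h] by simp
    also have "\<dots> \<le> norm h * norm h + 2 * (norm x * norm h)"
      using Cauchy_Schwarz_ineq2[of x h] zero_le_square[of "norm h"]
      unfolding power2_eq_square by linarith
    also have "\<dots> \<le> 3 * r * norm h"
      using x h \<kappa> mult_right_mono[OF x, of "norm h"] mult_right_mono[of "norm h" r "norm h"]
      by (simp add: algebra_simps)
    also have "\<dots> < \<theta>"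
      using h \<open>3 * r * \<kappa> \<le> \<theta>\<close> assms(2) by (smt (verit) mult_strict_left_mono)
    finally show "\<bar>(norm (x - h))\<^sup>2 - (norm x)\<^sup>2\<bar> < \<theta>" .
  qed
qed

lemma minimizer_of_perturbation_quadratic_bound:
  fixes f g :: "'a::real_normed_vector \<Rightarrow> real"
  assumes "z \<in> S" "0 \<in> S" and min: "\<And>x. x \<in> S \<Longrightarrow> g z \<le> g x"
    and growth: "\<And>x. x \<in> S \<Longrightarrow> f 0 + \<epsilon> * (norm x)\<^sup>2 \<le> f x"
    and close: "\<And>x. x \<in> S \<Longrightarrow> \<bar>g x - f x\<bar> \<le> \<tau>"
  shows "\<epsilon> * (norm z)\<^sup>2 \<le> 2 * \<tau>"
  using growth[OF assms(1)] close[OF assms(1)] close[OF assms(2)] min[OF assms(2)]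
  unfolding abs_le_iff by linarith

lemma continuous_on_cball_translate:
  fixes \<phi> :: "'a::real_normed_vector \<Rightarrow> real"
  assumes "continuous_on (cball 0 (2 * r)) \<phi>" "norm h \<le> r"
  shows "continuous_on (cball 0 r) (\<lambda>x. \<phi> (x - h))"
proof (rule continuous_on_compose2[OF assms(1)])
  show "(\<lambda>x. x - h) ` cball 0 r \<subseteq> cball 0 (2 * r)"
    using assms(2) norm_triangle_ineq4 by (fastforce intro: order_trans)
qed (auto intro!: continuous_intros)

lemma perturbed_minimizer_interior:
  fixes \<phi> g :: "real^'n::finite \<Rightarrow> real"
  assumes "open U" "0 \<in> U" "continuous_on U \<phi>" "continuous_on UNIV g" "\<epsilon> > 0" "\<eta> > 0"
    and touch: "\<And>x. x \<in> U \<Longrightarrow> \<sigma> * (\<phi> 0 - g 0) \<le> \<sigma> * (\<phi> x - g x)"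
  obtains r \<kappa> where "0 < \<kappa>" "\<kappa> \<le> r" "2 * r < \<eta>" "cball 0 (2 * r) \<subseteq> U"
    and "\<And>h. norm h < \<kappa> \<Longrightarrow> \<exists>z. norm z < r \<and> (\<forall>x\<in>cball 0 r.
           \<sigma> * (\<phi> (z - h) - g z) + \<epsilon> * (norm (z - h))\<^sup>2 \<le> \<sigma> * (\<phi> (x - h) - g x) + \<epsilon> * (norm (x - h))\<^sup>2)"
proof -
  define m where "m h x = \<sigma> * (\<phi> (x - h) - g x) + \<epsilon> * (norm (x - h))\<^sup>2" for h x
  obtain e where e: "e > 0" "ball 0 e \<subseteq> U" using assms(1,2) open_contains_ball by blast
  define r where "r = min (e / 3) (\<eta> / 3)"
  have r: "r > 0" "2 * r < \<eta>" and cb: "cball 0 (2 * r) \<subseteq> U"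
    using e assms(6) by (auto simp: r_def)
  have \<phi>: "continuous_on (cball 0 (2 * r)) \<phi>" using continuous_on_subset[OF assms(3) cb] .
  define \<theta> where "\<theta> = \<epsilon> * r\<^sup>2 / (4 * (\<bar>\<sigma>\<bar> + \<epsilon>))"
  have pos: "\<bar>\<sigma>\<bar> + \<epsilon> > 0" using assms(5) by linarith
  then have \<theta>: "\<theta> > 0" using r assms(5) by (simp add: \<theta>_def)
  have \<theta>_eq: "(\<bar>\<sigma>\<bar> + \<epsilon>) * \<theta> = \<epsilon> * r\<^sup>2 / 4"
    unfolding \<theta>_def using pos by (simp add: field_simps)
  obtain \<kappa> where \<kappa>: "0 < \<kappa>" "\<kappa> \<le> r"
    and small: "\<And>h x. norm h < \<kappa> \<Longrightarrow> norm x \<le> r \<Longrightarrow>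
           \<bar>\<phi> (x - h) - \<phi> x\<bar> < \<theta> \<and> \<bar>(norm (x - h))\<^sup>2 - (norm x)\<^sup>2\<bar> < \<theta>"
    using uniformly_small_translation[OF \<phi> r(1) \<theta>] by blast
  have close: "\<bar>m h x - m 0 x\<bar> \<le> \<epsilon> * r\<^sup>2 / 4" if "norm h < \<kappa>" "norm x \<le> r" for h x
  proof -
    have "m h x - m 0 x = \<sigma> * (\<phi> (x - h) - \<phi> x) + \<epsilon> * ((norm (x - h))\<^sup>2 - (norm x)\<^sup>2)"
      by (simp add: m_def algebra_simps)
    then have "\<bar>m h x - m 0 x\<bar> \<le> \<bar>\<sigma>\<bar> * \<bar>\<phi> (x - h) - \<phi> x\<bar> + \<epsilon> * \<bar>(norm (x - h))\<^sup>2 - (norm x)\<^sup>2\<bar>"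
      using abs_triangle_ineq[of "\<sigma> * (\<phi> (x - h) - \<phi> x)" "\<epsilon> * ((norm (x - h))\<^sup>2 - (norm x)\<^sup>2)"]
        assms(5) by (simp add: abs_mult)
    also have "\<dots> \<le> \<bar>\<sigma>\<bar> * \<theta> + \<epsilon> * \<theta>"
      using small[OF that] assms(5) by (intro add_mono mult_left_mono) auto
    finally show ?thesis using \<theta>_eq by (simp add: algebra_simps)
  qed
  show thesis
  proof (rule that[OF \<kappa> r(2) cb], unfold m_def[symmetric])
    fix h :: "real^'n" assume h: "norm h < \<kappa>"
    have "continuous_on (cball 0 r) (m h)"
      unfolding m_def using continuous_on_cball_translate[OF \<phi>, of h] h \<kappa>
      by (intro continuous_intros continuous_on_subset[OF assms(4)]) auto
    then obtain z where z: "z \<in> cball 0 r" "\<And>x. x \<in> cball 0 r \<Longrightarrow> m h z \<le> m h x"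
      using continuous_attains_inf[OF compact_cball] r(1) by (metis empty_iff centre_in_cball less_imp_le)
    have "\<epsilon> * (norm z)\<^sup>2 \<le> 2 * (\<epsilon> * r\<^sup>2 / 4)"
    proof (rule minimizer_of_perturbation_quadratic_bound[where g = "m h" and f = "m 0", OF z(1)])
      show "0 \<in> cball 0 r" using r(1) by simp
      show "m h z \<le> m h x" if "x \<in> cball 0 r" for x using z(2)[OF that] .
      show "m 0 0 + \<epsilon> * (norm x)\<^sup>2 \<le> m 0 x" if "x \<in> cball 0 r" for x
        using touch[of x] that cb r(1) by (simp add: m_def algebra_simps subset_eq)
      show "\<bar>m h x - m 0 x\<bar> \<le> \<epsilon> * r\<^sup>2 / 4" if "x \<in> cball 0 r" for x
        using close[OF h] that by simp
    qed
    then have "\<epsilon> * (norm z)\<^sup>2 \<le> \<epsilon> * (r\<^sup>2 / 2)" by simp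
    then have "(norm z)\<^sup>2 \<le> r\<^sup>2 / 2" using assms(5) by simp
    also have "\<dots> < r\<^sup>2" using r(1) by simp
    finally have "norm z < r" using r(1) by (simp add: power_less_imp_less_base)
    with z show "\<exists>z. norm z < r \<and> (\<forall>x\<in>cball 0 r. m h z \<le> m h x)" by blast
  qed
qed

lemma hess_diag_of_min_at_origin:
  fixes \<phi> g :: "real^'n::finite \<Rightarrow> real"
  assumes U: "open U" "ball 0 \<kappa> \<subseteq> U" "Ck_on 2 U \<phi>" and g: "g differentiable (at 0)"
    and "\<sigma> \<noteq> 0" "\<kappa> > 0"
    and min: "\<And>y t. norm y < \<kappa> \<Longrightarrow> \<bar>t\<bar> < \<kappa> \<Longrightarrow>
       \<sigma> * (\<phi> y - g 0) + \<epsilon> * (norm y)\<^sup>2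
         \<le> \<sigma> * (\<phi> (y + t *\<^sub>R axis i 1) - g (t *\<^sub>R axis i 1)) + \<epsilon> * (norm (y + t *\<^sub>R axis i 1))\<^sup>2"
  shows "\<sigma> * hess \<phi> 0 $i$i = -2 * \<epsilon>"
proof -
  have first_order: "\<sigma> * partial i \<phi> y = \<sigma> * partial i g 0 - 2 * \<epsilon> * y$i" if y: "norm y < \<kappa>" for y
  proof -
    have "y \<in> U" using y U(2) by auto
    then have d\<phi>: "((\<lambda>t. \<phi> (y + t *\<^sub>R axis i 1)) has_real_derivative partial i \<phi> y) (at 0)"
      using has_real_derivative_along_line[of \<phi> y 0 "axis i 1"]
        Ck_on_2_imp_differentiable(1)[OF U(3,1)] by (simp add: sum_axis_mult)
    have "g differentiable (at (0 + 0 *\<^sub>R axis i 1))" using g by simp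
    from has_real_derivative_along_line[OF this]
    have dg: "((\<lambda>t. g (t *\<^sub>R axis i 1)) has_real_derivative partial i g 0) (at 0)"
      unfolding sum_axis_mult by simp
    define G where "G t = \<sigma> * (\<phi> (y + t *\<^sub>R axis i 1) - g (t *\<^sub>R axis i 1))
        + \<epsilon> * ((norm y)\<^sup>2 + 2 * t * y$i + t\<^sup>2)" for t
    have "(G has_real_derivative \<sigma> * (partial i \<phi> y - partial i g 0) + \<epsilon> * (2 * y$i)) (at 0)"
      unfolding G_def by (auto intro!: derivative_eq_intros d\<phi> dg)
    then have "\<sigma> * (partial i \<phi> y - partial i g 0) + \<epsilon> * (2 * y$i) = 0"
    proof (rule DERIV_local_min[OF _ \<open>\<kappa> > 0\<close>], intro allI impI)
      fix t :: real assume "\<bar>0 - t\<bar> < \<kappa>"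
      then show "G 0 \<le> G t"
        using min[OF y, of t] by (simp add: G_def norm_add_scaleR_power2 inner_axis)
    qed
    then show ?thesis by (simp add: algebra_simps)
  qed
  have "((\<lambda>t. partial i \<phi> (0 + t *\<^sub>R axis i 1)) has_real_derivative -2 * \<epsilon> / \<sigma>) (at 0)"
  proof (rule has_field_derivative_transform_within_open
      [where S = "ball 0 \<kappa>" and f = "\<lambda>t. partial i g 0 - 2 * \<epsilon> * t / \<sigma>"])
    show "((\<lambda>t. partial i g 0 - 2 * \<epsilon> * t / \<sigma>) has_real_derivative -2 * \<epsilon> / \<sigma>) (at 0)"
      using \<open>\<sigma> \<noteq> 0\<close> by (auto intro!: derivative_eq_intros)
    fix t :: real assume "t \<in> ball 0 \<kappa>"
    then have "norm (t *\<^sub>R axis i 1 :: real^'n) < \<kappa>" by simp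
    from first_order[OF this] show "partial i g 0 - 2 * \<epsilon> * t / \<sigma> = partial i \<phi> (0 + t *\<^sub>R axis i 1)"
      using \<open>\<sigma> \<noteq> 0\<close> by (simp add: field_simps)
  qed (use \<open>\<kappa> > 0\<close> in auto)
  then have "partial i (partial i \<phi>) 0 = -2 * \<epsilon> / \<sigma>"
    unfolding partial_def[of i "partial i \<phi>"] by (rule DERIV_imp_deriv)
  then show ?thesis using \<open>\<sigma> \<noteq> 0\<close> by (simp add: hess_def)
qed

lemma perturbed_touching_or_hess_diag:
  fixes \<phi> g :: "real^'n::finite \<Rightarrow> real"
  assumes U: "open U" "0 \<in> U" "Ck_on 2 U \<phi>"
    and g: "Ck_on 2 (-{0}) g" "g differentiable (at 0)"
    and \<sigma>: "\<sigma> \<noteq> 0" and "\<epsilon> > 0" "\<eta> > 0"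
    and touch: "\<And>x. x \<in> U \<Longrightarrow> \<sigma> * (\<phi> 0 - g 0) \<le> \<sigma> * (\<phi> x - g x)"
  shows "(\<exists>z a. 0 < norm z \<and> norm z < \<eta> \<and> norm a < \<eta> \<and>
           (\<forall>v. 0 \<le> \<sigma> * (v \<bullet> ((hess \<phi> a - hess g z) *v v)) + 2 * \<epsilon> * (norm v)\<^sup>2))
       \<or> (\<forall>i. \<sigma> * hess \<phi> 0 $i$i = -2 * \<epsilon>)"
proof -
  define m where "m h x = \<sigma> * (\<phi> (x - h) - g x) + \<epsilon> * (norm (x - h))\<^sup>2" for h x
  have \<phi>c: "continuous_on U \<phi>"
    using U(3) by (simp add: numeral_2_eq_2 differentiable_imp_continuous_on)
  have "continuous_on UNIV g" using Ck_on_2_punctured_continuous_on_UNIV[OF g] .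
  then obtain r \<kappa> where \<kappa>: "0 < \<kappa>" "\<kappa> \<le> r" and r: "2 * r < \<eta>" and cb: "cball 0 (2 * r) \<subseteq> U"
    and minimizer: "\<And>h. norm h < \<kappa> \<Longrightarrow> \<exists>z. norm z < r \<and> (\<forall>x\<in>cball 0 r. m h z \<le> m h x)"
    using perturbed_minimizer_interior[OF U(1,2) \<phi>c _ \<open>\<epsilon> > 0\<close> \<open>\<eta> > 0\<close> touch]
    unfolding m_def by metis
  show ?thesis
  proof (cases "\<exists>h z. norm h < \<kappa> \<and> z \<noteq> 0 \<and> norm z < r \<and> (\<forall>x\<in>cball 0 r. m h z \<le> m h x)")
    case True
    then obtain h z where h: "norm h < \<kappa>" and z: "z \<noteq> 0" "norm z < r"
      and min: "\<And>x. x \<in> cball 0 r \<Longrightarrow> m h z \<le> m h x" by blast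
    define a where "a = z - h"
    have "norm a < 2 * r" using norm_triangle_ineq4[of z h] h z \<kappa> by (simp add: a_def)
    then have a: "a \<in> U" using cb by auto
    have "0 \<le> \<sigma> * (v \<bullet> ((hess \<phi> a - hess g z) *v v)) + 2 * \<epsilon> * (norm v)\<^sup>2" for v
    proof (rule touching_hess_ineq[OF U(3,1) a g(1) open_Compl[OF closed_singleton]])
      show "z \<in> -{0}" "r - norm z > 0" using z by auto
      fix k :: "real^'n" assume "norm k < r - norm z"
      then have "z + k \<in> cball 0 r" using norm_triangle_ineq[of z k] by simp
      from min[OF this] show "\<sigma> * (\<phi> a - g z) + \<epsilon> * (norm a)\<^sup>2
          \<le> \<sigma> * (\<phi> (a + k) - g (z + k)) + \<epsilon> * (norm (a + k))\<^sup>2"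
        by (simp add: m_def a_def algebra_simps)
    qed
    moreover have "norm a < \<eta>" "norm z < \<eta>"
      using \<open>norm a < 2 * r\<close> z r norm_ge_zero[of z] by linarith+
    ultimately show ?thesis using z(1) by auto
  next
    case False
    have "\<sigma> * hess \<phi> 0 $i$i = -2 * \<epsilon>" for i
    proof (rule hess_diag_of_min_at_origin[OF U(1) _ U(3) g(2) \<sigma> \<kappa>(1)])
      show "ball 0 \<kappa> \<subseteq> U" using cb \<kappa> by auto
      fix y :: "real^'n" and t :: real assume y: "norm y < \<kappa>" and t: "\<bar>t\<bar> < \<kappa>"
      obtain z where "norm z < r" "\<forall>x\<in>cball 0 r. m (-y) z \<le> m (-y) x"
        using minimizer[of "-y"] y by auto
      moreover from this False y have "z = 0" by (metis norm_minus_cancel)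
      moreover have "t *\<^sub>R axis i (1::real) \<in> cball 0 r" using t \<kappa> by simp
      ultimately have "m (-y) 0 \<le> m (-y) (t *\<^sub>R axis i 1)" by blast
      then show "\<sigma> * (\<phi> y - g 0) + \<epsilon> * (norm y)\<^sup>2
          \<le> \<sigma> * (\<phi> (y + t *\<^sub>R axis i 1) - g (t *\<^sub>R axis i 1)) + \<epsilon> * (norm (y + t *\<^sub>R axis i 1))\<^sup>2"
        by (simp add: m_def add.commute)
    qed
    then show ?thesis by blast
  qed
qed

lemma perturbed_touching_near_origin:
  fixes \<phi> g :: "real^'n::finite \<Rightarrow> real"
  assumes "open U" "0 \<in> U" "Ck_on 2 U \<phi>" "Ck_on 2 (-{0}) g" "g differentiable (at 0)"
    and "\<sigma> \<noteq> 0" "\<epsilon> > 0" "\<eta> > 0"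
    and "\<And>x. x \<in> U \<Longrightarrow> \<sigma> * (\<phi> 0 - g 0) \<le> \<sigma> * (\<phi> x - g x)"
  obtains z a where "0 < norm z" "norm z < \<eta>" "norm a < \<eta>"
    and "\<And>v. 0 \<le> \<sigma> * (v \<bullet> ((hess \<phi> a - hess g z) *v v)) + 2 * \<epsilon> * (norm v)\<^sup>2"
proof -
  note alternative = perturbed_touching_or_hess_diag[OF assms(1-6) _ assms(8,9)]
  have "\<epsilon> / 2 > 0" using assms(7) by simp
  \<comment> \<open>the diagonal alternative cannot hold for both \<open>\<epsilon>\<close> and \<open>\<epsilon> / 2\<close>\<close>
  from alternative[OF assms(7)] alternative[OF this] assms(7)
  consider (\<epsilon>) "\<exists>z a. 0 < norm z \<and> norm z < \<eta> \<and> norm a < \<eta> \<and>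
           (\<forall>v. 0 \<le> \<sigma> * (v \<bullet> ((hess \<phi> a - hess g z) *v v)) + 2 * \<epsilon> * (norm v)\<^sup>2)"
    | (half_\<epsilon>) "\<exists>z a. 0 < norm z \<and> norm z < \<eta> \<and> norm a < \<eta> \<and>
           (\<forall>v. 0 \<le> \<sigma> * (v \<bullet> ((hess \<phi> a - hess g z) *v v)) + 2 * (\<epsilon> / 2) * (norm v)\<^sup>2)"
    by fastforce
  then show thesis
  proof cases
    case \<epsilon>
    then show thesis using that by blast
  next
    case half_\<epsilon>
    moreover have "2 * (\<epsilon> / 2) * (norm v)\<^sup>2 \<le> 2 * \<epsilon> * (norm v)\<^sup>2" for v :: "real^'n"
      using assms(7) by (simp add: mult_right_mono)
    ultimately show thesis using that by (meson add_le_cancel_left order_trans)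
  qed
qed

section \<open>Viscosity solutions\<close>

lemma signed_monotone:
  fixes F :: "real^'n::finite^'n \<Rightarrow> real"
  assumes mono: "\<And>M M'. psd_matrix (M' - M) \<Longrightarrow> F M \<le> F M'"
    and \<sigma>: "\<sigma> = 1 \<or> \<sigma> = -1"
    and "\<And>v. 0 \<le> \<sigma> * (v \<bullet> ((M' - M) *v v))"
  shows "\<sigma> * F M \<le> \<sigma> * F M'"
  using \<sigma>
proof
  assume "\<sigma> = 1"
  then show ?thesis using assms(3) by (simp add: mono psd_matrix_def)
next
  assume "\<sigma> = -1"
  then have "psd_matrix (M - M')"
    using assms(3) by (simp add: psd_matrix_def quadratic_form_diff)
  then show ?thesis using \<open>\<sigma> = -1\<close> mono by simp
qed

lemma touching_signed_monotone:
  fixes F :: "real^'n::finite^'n \<Rightarrow> real" and w \<phi> :: "real^'n \<Rightarrow> real"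
  assumes mono: "\<And>M M'. psd_matrix (M' - M) \<Longrightarrow> F M \<le> F M'" and \<sigma>: "\<sigma> = 1 \<or> \<sigma> = -1"
    and w: "Ck_on 2 V w" "open V" "x0 \<in> V" and \<phi>: "Ck_on 2 U \<phi>" "open U" "x0 \<in> U"
    and touch: "\<And>x. x \<in> U \<Longrightarrow> \<sigma> * (\<phi> x0 - w x0) \<le> \<sigma> * (\<phi> x - w x)"
  shows "\<sigma> * F (hess w x0) \<le> \<sigma> * F (hess \<phi> x0)"
proof (rule signed_monotone[OF mono \<sigma>])
  fix v :: "real^'n"
  obtain e where e: "e > 0" "ball x0 e \<subseteq> U" using \<phi>(2,3) open_contains_ball by blast
  have "0 \<le> \<sigma> * (v \<bullet> ((hess \<phi> x0 - hess w x0) *v v)) + 2 * 0 * (norm v)\<^sup>2"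
  proof (rule touching_hess_ineq[OF \<phi>(1-3) w e(1)])
    fix h :: "real^'n" assume "norm h < e"
    then have "x0 + h \<in> U" using e(2) by (auto simp: dist_norm)
    then show "\<sigma> * (\<phi> x0 - w x0) + 0 * (norm x0)\<^sup>2
        \<le> \<sigma> * (\<phi> (x0 + h) - w (x0 + h)) + 0 * (norm (x0 + h))\<^sup>2"
      using touch by simp
  qed
  then show "0 \<le> \<sigma> * (v \<bullet> ((hess \<phi> x0 - hess w x0) *v v))" by simp
qed

lemma abs_diff_le_of_le_add_norm:
  assumes "\<And>M M'. F M \<le> F M' + L * norm (M - M')"
  shows "\<bar>F M - F M'\<bar> \<le> L * norm (M - M')"
  using assms[of M M'] assms[of M' M] by (simp add: norm_minus_commute)

lemma viscosity_test_at_origin: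
  fixes F :: "real^'n::finite^'n \<Rightarrow> real" and w \<phi> :: "real^'n \<Rightarrow> real"
  assumes mono: "\<And>M M'. psd_matrix (M' - M) \<Longrightarrow> F M \<le> F M'"
    and lip: "\<And>M M'. F M \<le> F M' + L * norm (M - M')" "L \<ge> 0"
    and w: "Ck_on 2 (-{0}) w" "w differentiable (at 0)"
    and zero: "\<And>z. z \<in> \<Omega> \<Longrightarrow> z \<noteq> 0 \<Longrightarrow> F (hess w z) = 0"
    and \<sigma>: "\<sigma> = 1 \<or> \<sigma> = -1"
    and \<phi>: "open U" "0 \<in> U" "U \<subseteq> \<Omega>" "Ck_on 2 U \<phi>"
    and touch: "\<And>x. x \<in> U \<Longrightarrow> \<sigma> * (\<phi> 0 - w 0) \<le> \<sigma> * (\<phi> x - w x)"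
  shows "0 \<le> \<sigma> * F (hess \<phi> 0)"
proof (rule ccontr)
  define d where "d = - \<sigma> * F (hess \<phi> 0)"
  assume "\<not> 0 \<le> \<sigma> * F (hess \<phi> 0)"
  then have d: "d > 0" by (simp add: d_def)
  define \<rho> where "\<rho> = d / (4 * (L + 1))"
  have \<rho>: "\<rho> > 0" "L * (2 * \<rho>) \<le> d / 2"
    using d lip(2) by (simp_all add: \<rho>_def field_simps)
  obtain \<eta>0 where \<eta>0: "\<eta>0 > 0" "\<And>a. norm a < \<eta>0 \<Longrightarrow> norm (hess \<phi> a - hess \<phi> 0) < \<rho>"
    using isCont_hess[OF \<phi>(4,1,2)] \<rho>(1) unfolding continuous_at_eps_delta dist_norm
    by (metis diff_zero)
  obtain e where e: "e > 0" "ball 0 e \<subseteq> U" using \<phi>(1,2) open_contains_ball by blast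
  define \<epsilon> where "\<epsilon> = \<rho> / (2 * (norm (mat 1 :: real^'n^'n) + 1))"
  have "norm (mat 1 :: real^'n^'n) + 1 > 0"
    using norm_ge_zero[of "mat 1 :: real^'n^'n"] by linarith
  then have \<epsilon>: "\<epsilon> > 0" "2 * \<epsilon> * norm (mat 1 :: real^'n^'n) < \<rho>"
    using \<rho>(1) by (simp_all add: \<epsilon>_def field_simps)
  have "\<sigma> \<noteq> 0" "min \<eta>0 e > 0" using \<sigma> \<eta>0(1) e(1) by auto
  then obtain z a where z: "0 < norm z" "norm z < min \<eta>0 e" and a: "norm a < min \<eta>0 e"
    and touching: "\<And>v. 0 \<le> \<sigma> * (v \<bullet> ((hess \<phi> a - hess w z) *v v)) + 2 * \<epsilon> * (norm v)\<^sup>2"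
    using perturbed_touching_near_origin[OF \<phi>(1,2,4) w _ \<epsilon>(1) _ touch] by metis
  define M where "M = hess \<phi> a + (2 * \<sigma> * \<epsilon>) *\<^sub>R mat 1"
  have "z \<in> \<Omega>" using z e(2) \<phi>(3) by auto
  have "\<sigma> * F (hess w z) \<le> \<sigma> * F M"
  proof (rule signed_monotone[OF mono \<sigma>])
    fix v :: "real^'n"
    show "0 \<le> \<sigma> * (v \<bullet> ((M - hess w z) *v v))"
      using touching[of v] \<sigma>
      by (elim disjE) (simp_all add: M_def quadratic_form_diff quadratic_form_scaleR_id matrix_vector_mult_add_rdistrib
          inner_add_right algebra_simps)
  qed
  then have "0 \<le> \<sigma> * F M" using zero[OF \<open>z \<in> \<Omega>\<close>] z(1) by simp
  moreover have "norm (M - hess \<phi> 0) < 2 * \<rho>"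
  proof -
    have "norm (M - hess \<phi> 0) \<le> norm (hess \<phi> a - hess \<phi> 0) + 2 * \<epsilon> * norm (mat 1 :: real^'n^'n)"
      using norm_triangle_ineq[of "hess \<phi> a - hess \<phi> 0" "(2 * \<sigma> * \<epsilon>) *\<^sub>R mat 1"] \<sigma> \<epsilon>(1)
      by (auto simp: M_def algebra_simps)
    then show ?thesis using \<eta>0(2)[of a] a \<epsilon>(2) by simp
  qed
  then have "L * norm (M - hess \<phi> 0) \<le> d / 2"
    using \<rho>(2) lip(2) by (smt (verit) mult_left_mono)
  moreover have "\<sigma> * F M \<le> \<sigma> * F (hess \<phi> 0) + L * norm (M - hess \<phi> 0)"
    using abs_diff_le_of_le_add_norm[OF lip(1), of M "hess \<phi> 0"] \<sigma> by (auto simp: abs_le_iff)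
  ultimately show False using d by (simp add: d_def)
qed

lemma viscosity_solution_punctured:
  fixes F :: "real^'n::finite^'n \<Rightarrow> real" and w :: "real^'n \<Rightarrow> real"
  assumes mono: "\<And>M M'. psd_matrix (M' - M) \<Longrightarrow> F M \<le> F M'"
    and lip: "\<And>M M'. F M \<le> F M' + L * norm (M - M')" "L \<ge> 0"
    and w: "Ck_on 2 (-{0}) w" "w differentiable (at 0)"
    and zero: "\<And>z. z \<in> \<Omega> \<Longrightarrow> z \<noteq> 0 \<Longrightarrow> F (hess w z) = 0"
  shows "viscosity_solution \<Omega> F w"
proof -
  have test: "0 \<le> \<sigma> * F (hess \<phi> x0)"
    if \<sigma>: "\<sigma> = 1 \<or> \<sigma> = -1" and "x0 \<in> \<Omega>" "open U" "x0 \<in> U" "U \<subseteq> \<Omega>" "Ck_on 2 U \<phi>"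
      and touch: "\<And>x. x \<in> U \<Longrightarrow> \<sigma> * (\<phi> x0 - w x0) \<le> \<sigma> * (\<phi> x - w x)"
    for \<sigma> x0 U \<phi>
  proof (cases "x0 = 0")
    case True
    then have "0 \<in> U" "\<And>x. x \<in> U \<Longrightarrow> \<sigma> * (\<phi> 0 - w 0) \<le> \<sigma> * (\<phi> x - w x)"
      using that by auto
    with True show ?thesis
      using viscosity_test_at_origin[of F, OF mono lip w zero \<sigma> \<open>open U\<close> _ \<open>U \<subseteq> \<Omega>\<close>
          \<open>Ck_on 2 U \<phi>\<close>] by simp
  next
    case False
    then have "x0 \<in> -{0}" by simp
    from touching_signed_monotone[of F, OF mono \<sigma> w(1) open_Compl[OF closed_singleton] this
        \<open>Ck_on 2 U \<phi>\<close> \<open>open U\<close> \<open>x0 \<in> U\<close> touch]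
    have "\<sigma> * F (hess w x0) \<le> \<sigma> * F (hess \<phi> x0)" .
    then show ?thesis using zero[OF \<open>x0 \<in> \<Omega>\<close> False] by simp
  qed
  have "continuous_on \<Omega> w"
    using Ck_on_2_punctured_continuous_on_UNIV[OF w] by (rule continuous_on_subset) simp
  moreover have "viscosity_subsolution \<Omega> F w"
    unfolding viscosity_subsolution_def
  proof (intro conjI ballI allI impI \<open>continuous_on \<Omega> w\<close>)
    fix x0 U \<phi> assume "x0 \<in> \<Omega>"
      and "open U \<and> x0 \<in> U \<and> U \<subseteq> \<Omega> \<and> Ck_on 2 U \<phi> \<and> (\<forall>x\<in>U. w x - \<phi> x \<le> w x0 - \<phi> x0)"
    then have "0 \<le> 1 * F (hess \<phi> x0)" by (intro test[of 1 x0 U \<phi>]) auto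
    then show "F (hess \<phi> x0) \<ge> 0" by simp
  qed
  moreover have "viscosity_supersolution \<Omega> F w"
    unfolding viscosity_supersolution_def
  proof (intro conjI ballI allI impI \<open>continuous_on \<Omega> w\<close>)
    fix x0 U \<phi> assume "x0 \<in> \<Omega>"
      and "open U \<and> x0 \<in> U \<and> U \<subseteq> \<Omega> \<and> Ck_on 2 U \<phi> \<and> (\<forall>x\<in>U. w x0 - \<phi> x0 \<le> w x - \<phi> x)"
    then have "0 \<le> -1 * F (hess \<phi> x0)" by (intro test[of "-1" x0 U \<phi>]) auto
    then show "F (hess \<phi> x0) \<le> 0" by simp
  qed
  ultimately show ?thesis by (simp add: viscosity_solution_def)
qed

lemma isaacs_family_vanishing:
  fixes H :: "'a \<Rightarrow> real^'n::finite^'n"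
  assumes "C > 0" "P \<noteq> {}"
    and "\<And>x y. x \<in> P \<Longrightarrow> y \<in> P \<Longrightarrow> \<exists>A\<in>K C. trace (A ** H x) = 0 \<and> trace (A ** H y) = 0"
  obtains \<B> where "\<B> \<noteq> {}" "\<And>S. S \<in> \<B> \<Longrightarrow> S \<noteq> {} \<and> S \<subseteq> K C"
    and "\<And>z. z \<in> P \<Longrightarrow> isaacs \<B> (H z) = 0"
proof -
  define A where "A x y = (SOME A. A \<in> K C \<and> trace (A ** H x) = 0 \<and> trace (A ** H y) = 0)" for x y
  have A: "A x y \<in> K C" "trace (A x y ** H x) = 0" "trace (A x y ** H y) = 0"
    if "x \<in> P" "y \<in> P" for x y
    using someI_ex[OF assms(3)[OF that, unfolded Bex_def]] by (simp_all add: A_def)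
  define \<B> where "\<B> = (\<lambda>y. (\<lambda>x. A x y) ` P) ` P"
  have \<B>: "\<B> \<noteq> {}" "\<And>S. S \<in> \<B> \<Longrightarrow> S \<noteq> {} \<and> S \<subseteq> K C"
    using assms(2) A(1) by (auto simp: \<B>_def)
  have "isaacs \<B> (H z) = 0" if z: "z \<in> P" for z
  proof (rule isaacs_eq_0[OF assms(1) \<B>(2)])
    show "\<exists>A\<in>S. trace (A ** H z) = 0" if "S \<in> \<B>" for S
      using that z A(2) by (auto simp: \<B>_def)
    show "(\<lambda>x. A x z) ` P \<in> \<B>" using z by (simp add: \<B>_def)
    show "\<And>A'. A' \<in> (\<lambda>x. A x z) ` P \<Longrightarrow> trace (A' ** H z) = 0"
      using z A(3) by auto
  qed
  with \<B> show thesis by (rule that)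
qed

theorem lemma5p1:
  fixes w :: "real^'n::finite \<Rightarrow> real" and C \<alpha> :: real
  assumes "C > 0"
    and "1 < \<alpha>" and "\<alpha> \<le> 2"
    and "C_inf_on (- {0}) w"
    and "\<forall>t>0. \<forall>x. w (t *\<^sub>R x) = t powr \<alpha> * w x"
    and "\<forall>x y. 0 < norm x \<and> norm x \<le> 1 \<and> 0 < norm y \<and> norm y \<le> 1 \<longrightarrow>
           (\<exists>A\<in>K C. trace (A ** hess w x) = 0 \<and> trace (A ** hess w y) = 0)"
  shows "\<exists>\<B>. \<B> \<noteq> {} \<and> (\<forall>S\<in>\<B>. S \<noteq> {} \<and> S \<subseteq> K C) \<and>
           viscosity_solution (ball 0 1) (isaacs \<B>) w"
proof -
  have w2: "Ck_on 2 (-{0}) w" using assms(4) unfolding C_inf_on_def by blast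
  have "continuous_on (-{0}) w" using assms(4) unfolding C_inf_on_def by (metis Ck_on.simps(1))
  then have w0: "w differentiable (at 0)"
    using homogeneous_has_derivative_zero[OF assms(2)] assms(5) by (auto simp: differentiable_def)
  define P where "P = {x :: real^'n. 0 < norm x \<and> norm x \<le> 1}"
  have "axis i 1 \<in> P" for i by (simp add: P_def)
  then have "P \<noteq> {}" by blast
  moreover have "\<exists>A\<in>K C. trace (A ** hess w x) = 0 \<and> trace (A ** hess w y) = 0"
    if "x \<in> P" "y \<in> P" for x y
    using assms(6) that by (simp add: P_def)
  ultimately obtain \<B> where \<B>: "\<B> \<noteq> {}" "\<And>S. S \<in> \<B> \<Longrightarrow> S \<noteq> {} \<and> S \<subseteq> K C"
    and vanish: "\<And>z. z \<in> P \<Longrightarrow> isaacs \<B> (hess w z) = 0"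
    using isaacs_family_vanishing[OF assms(1)] by metis
  have "viscosity_solution (ball 0 1) (isaacs \<B>) w"
  proof (rule viscosity_solution_punctured[OF isaacs_mono[OF assms(1) \<B>]
        isaacs_le_add_norm[OF assms(1) \<B>] _ w2 w0])
    show "0 \<le> C * CARD('n)\<^sup>2" using assms(1) by simp
    show "isaacs \<B> (hess w z) = 0" if "z \<in> ball 0 1" "z \<noteq> 0" for z
      using vanish that by (simp add: P_def)
  qed
  with \<B> show ?thesis by blast
qed

end
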